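(* Let $x \in \mathbb{R}$ with $1 - x - x^2 \neq 0$, let $m \geq 1$ be an integer and let $n \geq 0$ be an integer. Then \[ \sum_{r=1}^{n} r^m F_r x^r = \frac{1}{1 - x - x^2} \sum_{i=1}^m \binom{m}{i} (-1)^{i + 1} \sum_{r=1}^n r^{m - i} F_r x^r + \frac{x^2}{1 - x - x^2} \sum_{i=1}^m \binom{m}{i} \sum_{r=1}^{n-1} r^{m - i} F_r x^r - \frac{n^m (F_{n+1} x^{n+1} + F_n x^{n+2})}{1 - x - x^2}. \]
   Context: $(F_r)_{r \geq 0}$ is the Fibonacci sequence: $F_0 = 0$, $F_1 = 1$, $F_r = F_{r-1} + F_{r-2}$ for $r \geq 2$. Empty sums are $0$. *)

theory Defs
  imports Complex_Main "HOL-Number_Theory.Fib"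
begin

end

theory Submission
  imports Defs
begin

text \<open>Multiplying the weighted sum by \<open>1 - x - x\<^sup>2\<close> and shifting indices, the recurrence
  \<open>F (r + 2) = F (r + 1) + F r\<close> leaves only the differences of the weights,
  \<open>r\<^sup>m - (r - 1)\<^sup>m\<close> and \<open>(r + 1)\<^sup>m - r\<^sup>m\<close>, plus two boundary terms. Expanding these
  differences by the binomial theorem and exchanging the order of summation gives the identity.\<close>

lemma power_diff_minus_one_binomial:
  fixes r :: "'a :: comm_ring_1"
  shows "(\<Sum>i = 1..m. of_nat (m choose i) * (-1) ^ (i + 1) * r ^ (m - i)) = r ^ m - (r - 1) ^ m"
proof -
  have "(r - 1) ^ m = (\<Sum>i\<le>m. of_nat (m choose i) * (-1) ^ i * r ^ (m - i))"
    using binomial_ring[of "-1" r m] by simp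
  also have "\<dots> = r ^ m + (\<Sum>i = 1..m. of_nat (m choose i) * (-1) ^ i * r ^ (m - i))"
    by (simp add: atMost_atLeast0 sum.atLeast_Suc_atMost)
  finally show ?thesis
    by (simp add: sum_negf[symmetric])
qed

lemma power_plus_one_diff_binomial:
  fixes r :: "'a :: comm_ring_1"
  shows "(\<Sum>i = 1..m. of_nat (m choose i) * r ^ (m - i)) = (r + 1) ^ m - r ^ m"
proof -
  have "(r + 1) ^ m = (\<Sum>i\<le>m. of_nat (m choose i) * r ^ (m - i))"
    using binomial_ring[of 1 r m] by (simp add: add.commute)
  also have "\<dots> = r ^ m + (\<Sum>i = 1..m. of_nat (m choose i) * r ^ (m - i))"
    by (simp add: atMost_atLeast0 sum.atLeast_Suc_atMost)
  finally show ?thesis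
    by simp
qed

lemma sum_weighted_sum_swap:
  fixes c :: "'i \<Rightarrow> 'a :: comm_semiring_0"
  shows "(\<Sum>i\<in>I. c i * (\<Sum>r\<in>R. a i r * b r)) = (\<Sum>r\<in>R. (\<Sum>i\<in>I. c i * a i r) * b r)"
  by (simp add: sum_distrib_left sum_distrib_right mult.assoc sum.swap[of _ I])

lemma fib_weighted_sum_by_parts:
  fixes f :: "nat \<Rightarrow> 'a :: comm_ring_1"
  assumes "f 0 = 0"
  shows "(\<Sum>r = 1..n. f r * of_nat (fib r) * x ^ r) * (1 - x - x ^ 2) =
     (\<Sum>r = 1..n. (f r - f (r - 1)) * of_nat (fib r) * x ^ r)
   + x ^ 2 * (\<Sum>r = 1..n - 1. (f (r + 1) - f r) * of_nat (fib r) * x ^ r)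
   - f n * (of_nat (fib (n + 1)) * x ^ (n + 1) + of_nat (fib n) * x ^ (n + 2))"
proof (induction n)
  case 0
  show ?case using assms by simp
next
  case (Suc n)
  show ?case
  proof (cases n)
    case 0
    then show ?thesis
      using assms by (simp add: power2_eq_square algebra_simps)
  next
    case (Suc k)
    then have "Suc n - 1 = Suc (n - 1)" by simp
    with Suc.IH Suc show ?thesis
      by (simp add: algebra_simps power2_eq_square)
  qed
qed

theorem theorem2p1:
  fixes x :: real and m n :: nat
  assumes "1 - x - x ^ 2 \<noteq> 0" and "m \<ge> 1"
  shows "(\<Sum>r = 1..n. real r ^ m * real (fib r) * x ^ r) =
     1 / (1 - x - x ^ 2) * (\<Sum>i = 1..m. real (m choose i) * (-1) ^ (i + 1) *
        (\<Sum>r = 1..n. real r ^ (m - i) * real (fib r) * x ^ r))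
   + x ^ 2 / (1 - x - x ^ 2) * (\<Sum>i = 1..m. real (m choose i) *
        (\<Sum>r = 1..n - 1. real r ^ (m - i) * real (fib r) * x ^ r))
   - real n ^ m * (real (fib (n + 1)) * x ^ (n + 1) + real (fib n) * x ^ (n + 2)) / (1 - x - x ^ 2)"
proof -
  have backward: "(\<Sum>i = 1..m. real (m choose i) * (-1) ^ (i + 1) *
        (\<Sum>r = 1..n. real r ^ (m - i) * real (fib r) * x ^ r))
     = (\<Sum>r = 1..n. (real r ^ m - real (r - 1) ^ m) * real (fib r) * x ^ r)"
  proof -
    have "(\<Sum>i = 1..m. real (m choose i) * (-1) ^ (i + 1) * real r ^ (m - i))
        = real r ^ m - real (r - 1) ^ m" if "r \<in> {1..n}" for r
      using that power_diff_minus_one_binomial[of m "real r"] by (simp add: of_nat_diff)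
    then show ?thesis
      unfolding sum_weighted_sum_swap[of "\<lambda>i. real (m choose i) * (-1) ^ (i + 1)"
          "\<lambda>i r. real r ^ (m - i)" "\<lambda>r. real (fib r) * x ^ r", unfolded mult.assoc[symmetric]]
      by (metis (no_types, lifting) sum.cong)
  qed
  have forward: "(\<Sum>i = 1..m. real (m choose i) *
        (\<Sum>r = 1..n - 1. real r ^ (m - i) * real (fib r) * x ^ r))
     = (\<Sum>r = 1..n - 1. (real (r + 1) ^ m - real r ^ m) * real (fib r) * x ^ r)"
    unfolding sum_weighted_sum_swap[of "\<lambda>i. real (m choose i)"
        "\<lambda>i r. real r ^ (m - i)" "\<lambda>r. real (fib r) * x ^ r", unfolded mult.assoc[symmetric]]
    by (simp only: power_plus_one_diff_binomial of_nat_add of_nat_1)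
  have "(\<Sum>r = 1..n. real r ^ m * real (fib r) * x ^ r) =
     ((\<Sum>r = 1..n. (real r ^ m - real (r - 1) ^ m) * real (fib r) * x ^ r)
   + x ^ 2 * (\<Sum>r = 1..n - 1. (real (r + 1) ^ m - real r ^ m) * real (fib r) * x ^ r)
   - real n ^ m * (real (fib (n + 1)) * x ^ (n + 1) + real (fib n) * x ^ (n + 2)))
     / (1 - x - x ^ 2)"
    unfolding eq_divide_eq using fib_weighted_sum_by_parts[of "\<lambda>r. real r ^ m"] assms by simp
  then show ?thesis
    unfolding backward forward by (simp add: add_divide_distrib diff_divide_distrib)
qed

end
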